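(* Let $r\ge 1$ be an integer, $\overline{x}\in\mathbb{R}^n$, and let $f:\mathbb{R}^n\to\mathbb{R}$ be of class $C^r$ on a neighbourhood $V$ of $\overline{x}$. Let $\Sigma\subset\mathbb{R}^n$ be locally closed at $\overline{x}$ with $\{x\in V\mid \nabla f(x)=0\}\subset\Sigma$. Let $c,\delta,\overline{w}>0$ satisfy $$\|\nabla f(x)\|\ge c\,\mathrm{dist}(x,\Sigma)^{r-1}\quad\text{for all }x\in\mathcal{H}_r^{\Sigma}(f,\overline{x};\overline{w})\cap\mathbb{B}_\delta(\overline{x}),$$ and assume moreover that the polynomial $T^rf(z)$ is the same for all $z\in\Sigma\cap\mathbb{B}_\delta(\overline{x})$. Then: (i) $f$ has a local minimum at $\overline{x}$ if and only if the polynomial $T^rf(\overline{x})$ has a local minimum at $\overline{x}$; (ii) if $f$ has a local minimum at $\overline{x}$, then there exists $\epsilon>0$ such that for every function $h:\mathbb{R}^n\to\mathbb{R}$ for which there is $\rho>0$ with $|h(x)-h(\overline{x})|\le\epsilon\,\mathrm{dist}(x,\Sigma)^r$ for all $x\in\mathbb{B}_\rho(\overline{x})$, the function $f+h$ has a local minimum at $\overline{x}$.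
   Context: $\mathbb{B}_\delta(x)$ denotes the closed Euclidean ball of radius $\delta$ centered at $x$, and $\mathrm{dist}(x,\Sigma)=\inf_{y\in\Sigma}\|x-y\|$. A set $\Sigma$ is locally closed at $x$ if $\Sigma\cap W$ is closed for some closed neighbourhood $W$ of $x$. We use the convention $t^0=1$ for all $t\ge 0$. For a function $g$ of class $C^r$ near a point $z$, $T^rg(z)$ denotes its $r$th Taylor polynomial at $z$: $T^rg(z)(x)=\sum_{j=0}^r\frac{1}{j!}\sum_{i_1,\dots,i_j=1}^n\frac{\partial^j g}{\partial x_{i_1}\cdots\partial x_{i_j}}(z)(x_{i_1}-z_{i_1})\cdots(x_{i_j}-z_{i_j})$. The horn-neighbourhood of degree $r$ and width $\overline{w}>0$ is $\mathcal{H}_r^{\Sigma}(f,\overline{x};\overline{w}):=\{x\in\mathbb{R}^n\mid |f(x)-f(\overline{x})|\le\overline{w}\,\mathrm{dist}(x,\Sigma)^r\}$. *)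

theory Defs
  imports "HOL-Analysis.Analysis"
begin

definition has_partial :: "'n::finite \<Rightarrow> (real^'n \<Rightarrow> real) \<Rightarrow> real^'n \<Rightarrow> bool" where
  "has_partial i g x \<longleftrightarrow> (\<exists>d. ((\<lambda>t. g (x + t *\<^sub>R axis i 1)) has_real_derivative d) (at 0))"

definition partial_deriv :: "'n::finite \<Rightarrow> (real^'n \<Rightarrow> real) \<Rightarrow> real^'n \<Rightarrow> real" where
  "partial_deriv i g x = (THE d. ((\<lambda>t. g (x + t *\<^sub>R axis i 1)) has_real_derivative d) (at 0))"

fun pderivs :: "'n::finite list \<Rightarrow> (real^'n \<Rightarrow> real) \<Rightarrow> real^'n \<Rightarrow> real" where
  "pderivs [] g = g"
| "pderivs (i # is) g = partial_deriv i (pderivs is g)"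

definition C_r_on :: "nat \<Rightarrow> (real^'n::finite) set \<Rightarrow> (real^'n \<Rightarrow> real) \<Rightarrow> bool" where
  "C_r_on r V g \<longleftrightarrow>
     (\<forall>is :: 'n list. length is < r \<longrightarrow> (\<forall>i. \<forall>x\<in>V. has_partial i (pderivs is g) x)) \<and>
     (\<forall>is :: 'n list. length is \<le> r \<longrightarrow> continuous_on V (pderivs is g))"

definition grad :: "(real^'n::finite \<Rightarrow> real) \<Rightarrow> real^'n \<Rightarrow> real^'n" where
  "grad g x = (\<chi> i. partial_deriv i g x)"

definition taylor_poly :: "nat \<Rightarrow> (real^'n::finite \<Rightarrow> real) \<Rightarrow> real^'n \<Rightarrow> real^'n \<Rightarrow> real" where
  "taylor_poly r g z x =
     (\<Sum>j\<le>r. (1 / fact j) *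
        (\<Sum>is\<in>{is :: 'n list. length is = j}.
            pderivs is g z * (\<Prod>k<j. x $ (is ! k) - z $ (is ! k))))"

definition horn_nbhd :: "nat \<Rightarrow> (real^'n::finite) set \<Rightarrow> (real^'n \<Rightarrow> real) \<Rightarrow> real^'n \<Rightarrow> real \<Rightarrow> (real^'n) set" where
  "horn_nbhd r \<Sigma> f xb w = {x. \<bar>f x - f xb\<bar> \<le> w * infdist x \<Sigma> ^ r}"

definition locally_closed_at :: "('a::topological_space) set \<Rightarrow> 'a \<Rightarrow> bool" where
  "locally_closed_at S x \<longleftrightarrow> (\<exists>W. closed W \<and> x \<in> interior W \<and> closed (S \<inter> W))"

definition local_min_at :: "('a::metric_space \<Rightarrow> real) \<Rightarrow> 'a \<Rightarrow> bool" where
  "local_min_at g x \<longleftrightarrow> (\<exists>e>0. \<forall>y\<in>ball x e. g x \<le> g y)"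

end

theory Submission
  imports Defs
begin

text \<open>
  If \<open>grad f xb \<noteq> 0\<close>, neither \<open>f\<close> nor its Taylor polynomial at \<open>xb\<close>, which has the
  same gradient there, has a local minimum at \<open>xb\<close>. Otherwise \<open>xb \<in> \<Sigma>\<close>, and since
  \<open>T\<^sup>r f(z)\<close> does not depend on \<open>z \<in> \<Sigma>\<close> near \<open>xb\<close>, the Taylor remainder estimate,
  uniform in the centre, gives \<open>\<bar>f - T\<^sup>r f(xb)\<bar> \<le> \<epsilon> dist(\<cdot>, \<Sigma>)\<^sup>r\<close> near \<open>xb\<close> for every
  \<open>\<epsilon> > 0\<close>.

  Both claims then follow from two growth properties that the gradient inequality on
  the horn imposes on \<open>f\<close>. They are obtained by an Ekeland-type argument applied to
  \<open>root r (f - f xb)\<close>, whose gradient has norm bounded below on the horn off \<open>\<Sigma>\<close>: a local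
  minimum at \<open>xb\<close> forces \<open>f - f xb \<ge> \<kappa> dist(\<cdot>, \<Sigma>)\<^sup>r\<close> nearby, and close to every \<open>x\<close>
  near \<open>xb\<close> with \<open>f x < f xb\<close> there is a \<open>y\<close> with \<open>f y - f xb \<le> -\<kappa> dist(y, \<Sigma>)\<^sup>r\<close>.
\<close>

section \<open>Partial derivatives and gradients\<close>

lemma has_partial_DERIV:
  "has_partial i g x \<Longrightarrow>
     ((\<lambda>t. g (x + t *\<^sub>R axis i 1)) has_real_derivative partial_deriv i g x) (at 0)"
  unfolding has_partial_def partial_deriv_def by (metis DERIV_unique theI)

lemma has_partial_DERIV_line:
  fixes g :: "real^'n \<Rightarrow> real"
  assumes "has_partial i g (q + s *\<^sub>R axis i 1)"
  shows "((\<lambda>t. g (q + t *\<^sub>R axis i 1)) has_real_derivative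
           partial_deriv i g (q + s *\<^sub>R axis i 1)) (at s)"
  using has_partial_DERIV[OF assms] DERIV_shift[of "\<lambda>t. g (q + t *\<^sub>R axis i 1)" _ 0 s]
  by (simp add: scaleR_add_left add_ac)

lemma partial_mvt_bound:
  fixes g :: "real^'n \<Rightarrow> real"
  assumes "\<And>t. min 0 s \<le> t \<Longrightarrow> t \<le> max 0 s \<Longrightarrow>
             has_partial i g (q + t *\<^sub>R axis i 1) \<and>
             \<bar>partial_deriv i g (q + t *\<^sub>R axis i 1) - G\<bar> \<le> e"
  shows "\<bar>g (q + s *\<^sub>R axis i 1) - g q - G * s\<bar> \<le> e * \<bar>s\<bar>"
proof (cases "s = 0")
  case True
  then show ?thesis by simp
next
  case False
  define diff where "diff = (\<lambda>m::nat. if m = 0 then (\<lambda>t. g (q + t *\<^sub>R axis i 1))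
                                      else (\<lambda>t. partial_deriv i g (q + t *\<^sub>R axis i 1)))"
  have "\<exists>t. (if s < 0 then s < t \<and> t < 0 else 0 < t \<and> t < s) \<and>
          g (q + s *\<^sub>R axis i 1) = (\<Sum>m<1. diff m 0 / fact m * (s - 0) ^ m) + diff 1 t / fact 1 * (s - 0) ^ 1"
  proof (rule Taylor[of 1 diff _ "min 0 s" "max 0 s"])
    show "\<forall>m t. m < 1 \<and> min 0 s \<le> t \<and> t \<le> max 0 s \<longrightarrow> DERIV (diff m) t :> diff (Suc m) t"
      using assms by (auto simp: diff_def intro!: has_partial_DERIV_line)
  qed (use False in \<open>auto simp: diff_def\<close>)
  then obtain t where t: "min 0 s \<le> t" "t \<le> max 0 s"
    and eq: "g (q + s *\<^sub>R axis i 1) = g q + partial_deriv i g (q + t *\<^sub>R axis i 1) * s"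
    by (auto simp: diff_def split: if_splits) (metis less_imp_le)+
  have "\<bar>g (q + s *\<^sub>R axis i 1) - g q - G * s\<bar> = \<bar>partial_deriv i g (q + t *\<^sub>R axis i 1) - G\<bar> * \<bar>s\<bar>"
    by (simp add: eq abs_mult[symmetric] algebra_simps)
  also have "\<dots> \<le> e * \<bar>s\<bar>"
    using assms[OF t] by (simp add: mult_right_mono)
  finally show ?thesis .
qed

lemma partial_increment_bound:
  fixes g :: "real^'n \<Rightarrow> real"
  assumes partials: "\<And>i u. u \<in> ball y \<rho> \<Longrightarrow>
             has_partial i g u \<and> \<bar>partial_deriv i g u - G $ i\<bar> \<le> e"
    and h: "norm h < \<rho>" and e: "e \<ge> 0"
  shows "\<bar>g (y + h) - g y - G \<bullet> h\<bar> \<le> e * CARD('n) * norm h"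
proof -
  define trunc where "trunc = (\<lambda>S. \<chi> j. if j \<in> S then h $ j else 0)"
  have "\<bar>g (y + trunc S) - g y - (\<Sum>i\<in>S. G $ i * h $ i)\<bar> \<le> e * card S * norm h" for S
  proof (induction S rule: infinite_finite_induct)
    case (infinite S)
    then show ?case by simp
  next
    case empty
    have "trunc {} = 0" by (simp add: trunc_def vec_eq_iff)
    then show ?case by simp
  next
    case (insert i S)
    define q where "q = y + trunc S"
    have q_step: "y + trunc (insert i S) = q + h $ i *\<^sub>R axis i 1"
      using insert(2) by (auto simp: q_def trunc_def vec_eq_iff axis_def)
    have step: "\<bar>g (q + h $ i *\<^sub>R axis i 1) - g q - G $ i * h $ i\<bar> \<le> e * \<bar>h $ i\<bar>"
    proof (rule partial_mvt_bound)
      fix t assume t: "min 0 (h $ i) \<le> t" "t \<le> max 0 (h $ i)"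
      have "norm (trunc S + t *\<^sub>R axis i 1) \<le> norm h"
        by (rule norm_le_componentwise_cart) (use t insert(2) in \<open>auto simp: trunc_def axis_def\<close>)
      moreover have "dist (q + t *\<^sub>R axis i 1) y = norm (trunc S + t *\<^sub>R axis i 1)"
        by (simp add: q_def dist_norm add.assoc)
      ultimately have "q + t *\<^sub>R axis i 1 \<in> ball y \<rho>"
        using h by (simp add: dist_commute)
      then show "has_partial i g (q + t *\<^sub>R axis i 1) \<and>
                 \<bar>partial_deriv i g (q + t *\<^sub>R axis i 1) - G $ i\<bar> \<le> e"
        using partials by blast
    qed
    have "\<bar>h $ i\<bar> \<le> norm h" by (rule component_le_norm_cart)
    then have "e * \<bar>h $ i\<bar> \<le> e * norm h" using e by (rule mult_left_mono)
    then show ?case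
      using step insert.IH insert(1,2) by (simp add: q_step q_def algebra_simps)
  qed
  from this[of UNIV] show ?thesis
    by (simp add: trunc_def inner_vec_def mult.commute)
qed

lemma continuous_partials_imp_has_derivative:
  fixes g :: "real^'n \<Rightarrow> real"
  assumes V: "open V" "y \<in> V" and partials: "\<And>i x. x \<in> V \<Longrightarrow> has_partial i g x"
    and cont: "\<And>i. continuous_on V (partial_deriv i g)"
  shows "(g has_derivative (\<lambda>h. grad g y \<bullet> h)) (at y)"
  unfolding has_derivative_at_alt
proof (intro conjI allI impI)
  show "bounded_linear (\<lambda>h. grad g y \<bullet> h)" by (rule bounded_linear_inner_right)
  fix e :: real assume e: "e > 0"
  define e' where "e' = e / CARD('n)"
  have e': "e' > 0" using e by (simp add: e'_def)
  have "continuous_on V (grad g)"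
    unfolding grad_def by (intro continuous_on_vec_lambda cont)
  then obtain d1 where d1: "d1 > 0" "\<And>u. u \<in> V \<Longrightarrow> dist u y < d1 \<Longrightarrow> dist (grad g u) (grad g y) < e'"
    using continuous_on_iff V e' by metis
  obtain d2 where d2: "d2 > 0" "ball y d2 \<subseteq> V" using V open_contains_ball by blast
  have "has_partial i g u \<and> \<bar>partial_deriv i g u - grad g y $ i\<bar> \<le> e'"
    if "u \<in> ball y (min d1 d2)" for i u
  proof
    have uV: "u \<in> V" using that d2 by auto
    then show "has_partial i g u" by (rule partials)
    have "\<bar>(grad g u - grad g y) $ i\<bar> \<le> dist (grad g u) (grad g y)"
      unfolding dist_norm by (rule component_le_norm_cart)
    also have "\<dots> < e'" using d1(2)[OF uV] that by (simp add: dist_commute)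
    finally show "\<bar>partial_deriv i g u - grad g y $ i\<bar> \<le> e'" by (simp add: grad_def)
  qed
  then have "\<bar>g (y + h) - g y - grad g y \<bullet> h\<bar> \<le> e * norm h" if "norm h < min d1 d2" for h
    using partial_increment_bound[of y "min d1 d2" g "grad g y" e' h] that e' by (simp add: e'_def)
  from this[of "_ - y"] show "\<exists>d>0. \<forall>z. norm (z - y) < d \<longrightarrow>
      norm (g z - g y - grad g y \<bullet> (z - y)) \<le> e * norm (z - y)"
    using d1 d2 by (intro exI[of _ "min d1 d2"]) auto
qed

lemma penalized_local_min_grad_bound:
  fixes g :: "'a::real_inner \<Rightarrow> real"
  assumes der: "(g has_derivative (\<lambda>h. G \<bullet> h)) (at y)" and e: "e > 0" and m: "m \<ge> 0"
    and min: "\<And>u. u \<in> ball y e \<Longrightarrow> g y + m * dist y x \<le> g u + m * dist u x"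
  shows "norm G \<le> m"
proof (cases "G = 0")
  case True
  then show ?thesis using m by simp
next
  case False
  then have nG: "norm G > 0" by simp
  have line: "((\<lambda>s::real. y - s *\<^sub>R G) has_derivative (\<lambda>s. - (s *\<^sub>R G))) (at 0)"
    by (auto intro!: derivative_eq_intros)
  have "((\<lambda>s. g (y - s *\<^sub>R G)) has_derivative (\<lambda>s. G \<bullet> (- (s *\<^sub>R G)))) (at 0)"
    using has_derivative_compose[OF line, of g "\<lambda>h. G \<bullet> h"] der by simp
  moreover have "(\<lambda>s. G \<bullet> (- (s *\<^sub>R G))) = (*) (- (G \<bullet> G))" by (rule ext) simp
  ultimately have "((\<lambda>s. g (y - s *\<^sub>R G)) has_real_derivative - (G \<bullet> G)) (at 0)"
    by (simp add: has_field_derivative_def)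
  then have "((\<lambda>s. (g (y - s *\<^sub>R G) - g y) / s) \<longlongrightarrow> - (G \<bullet> G)) (at 0)"
    unfolding has_field_derivative_iff by simp
  then have lim: "((\<lambda>s. (g (y - s *\<^sub>R G) - g y) / s) \<longlongrightarrow> - (G \<bullet> G)) (at_right 0)"
    by (rule tendsto_mono[OF at_le, rotated]) simp
  have "eventually (\<lambda>s. - m * norm G \<le> (g (y - s *\<^sub>R G) - g y) / s) (at_right 0)"
    unfolding eventually_at_right_field
  proof (intro exI[of _ "e / norm G"] conjI allI impI)
    show "0 < e / norm G" using e nG by simp
    fix s :: real assume s: "0 < s" "s < e / norm G"
    then have "y - s *\<^sub>R G \<in> ball y e" using nG by (simp add: dist_norm field_simps)
    then have "g y + m * dist y x \<le> g (y - s *\<^sub>R G) + m * dist (y - s *\<^sub>R G) x"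
      by (rule min)
    moreover have "dist (y - s *\<^sub>R G) x \<le> dist y x + s * norm G"
      using dist_triangle[of "y - s *\<^sub>R G" x y] s by (simp add: dist_norm dist_commute)
    then have "m * dist (y - s *\<^sub>R G) x \<le> m * dist y x + m * (s * norm G)"
      using m by (metis distrib_left mult_left_mono)
    ultimately have "- m * norm G * s \<le> g (y - s *\<^sub>R G) - g y"
      by (simp add: algebra_simps)
    then show "- m * norm G \<le> (g (y - s *\<^sub>R G) - g y) / s" using s by (simp add: field_simps)
  qed
  then have "- m * norm G \<le> - (G \<bullet> G)"
    by (rule tendsto_lowerbound[OF lim]) simp
  then have "norm G * norm G \<le> m * norm G" by (simp add: power2_norm_eq_inner[symmetric] power2_eq_square)
  then show ?thesis using nG by simp
qed

lemma local_min_imp_grad_zero: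
  fixes g :: "'a::real_inner \<Rightarrow> real"
  assumes "(g has_derivative (\<lambda>h. G \<bullet> h)) (at y)" and "local_min_at g y"
  shows "G = 0"
proof -
  obtain e where "e > 0" "\<forall>u\<in>ball y e. g y \<le> g u"
    using assms(2) unfolding local_min_at_def by blast
  then have "norm G \<le> 0"
    using penalized_local_min_grad_bound[OF assms(1), of e 0 y] by simp
  then show ?thesis by simp
qed

section \<open>Taylor expansion\<close>

definition higher_dir_deriv :: "nat \<Rightarrow> (real^'n::finite \<Rightarrow> real) \<Rightarrow> real^'n \<Rightarrow> real^'n \<Rightarrow> real" where
  "higher_dir_deriv m g v u =
     (\<Sum>is\<in>{is::'n list. length is = m}. pderivs is g u * (\<Prod>k<m. v $ (is ! k)))"

lemma taylor_poly_eq_higher_dir_deriv: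
  "taylor_poly r g z (z + v) = (\<Sum>j\<le>r. higher_dir_deriv j g v z / fact j)"
  unfolding taylor_poly_def higher_dir_deriv_def by simp

lemma higher_dir_deriv_0 [simp]: "higher_dir_deriv 0 g v u = g u"
proof -
  have "{is :: 'n list. length is = 0} = {[]}" by auto
  then show ?thesis by (simp add: higher_dir_deriv_def)
qed

lemma higher_dir_deriv_Suc:
  "higher_dir_deriv (Suc m) g v u =
     (\<Sum>i\<in>UNIV. \<Sum>is\<in>{is. length is = m}. pderivs (i # is) g u * (v $ i * (\<Prod>k<m. v $ (is ! k))))"
proof -
  let ?cons = "\<lambda>p. fst p # snd p"
  have lists: "{is :: 'n list. length is = Suc m} = ?cons ` (UNIV \<times> {is. length is = m})"
    by (auto simp: length_Suc_conv image_iff)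
  have "inj_on ?cons (UNIV \<times> {is :: 'n list. length is = m})"
    by (auto simp: inj_on_def)
  then have "higher_dir_deriv (Suc m) g v u =
      (\<Sum>p\<in>UNIV \<times> {is. length is = m}. pderivs (?cons p) g u * (\<Prod>k<Suc m. v $ (?cons p ! k)))"
    unfolding higher_dir_deriv_def lists by (subst sum.reindex) (simp_all add: comp_def)
  also have "\<dots> = (\<Sum>p\<in>UNIV \<times> {is. length is = m}.
                    pderivs (?cons p) g u * (v $ fst p * (\<Prod>k<m. v $ (snd p ! k))))"
    by (simp only: prod.lessThan_Suc_shift) simp
  finally show ?thesis
    by (simp add: sum.cartesian_product case_prod_beta)
qed

lemma higher_dir_deriv_zero_dir: "higher_dir_deriv (Suc m) g 0 u = 0"
  by (simp add: higher_dir_deriv_Suc)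

lemma taylor_poly_at_center: "taylor_poly r g z z = g z"
proof -
  have "taylor_poly r g z z = (\<Sum>j\<le>r. higher_dir_deriv j g 0 z / fact j)"
    using taylor_poly_eq_higher_dir_deriv[of r g z 0] by simp
  also have "\<dots> = (\<Sum>j\<le>r. if j = 0 then g z else 0)"
    by (intro sum.cong refl) (auto simp: gr0_conv_Suc higher_dir_deriv_zero_dir)
  finally show ?thesis by simp
qed

lemma C_r_on_pderivs_has_derivative:
  fixes f :: "real^'n \<Rightarrow> real"
  assumes fC: "C_r_on r V f" and V: "open V" "y \<in> V" and len: "length is < r"
  shows "(pderivs is f has_derivative (\<lambda>h. grad (pderivs is f) y \<bullet> h)) (at y)"
proof (rule continuous_partials_imp_has_derivative[OF V])
  show "\<And>i x. x \<in> V \<Longrightarrow> has_partial i (pderivs is f) x"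
    using fC len unfolding C_r_on_def by blast
  fix i
  have "continuous_on V (pderivs (i # is) f)"
    using fC len unfolding C_r_on_def by (metis Suc_leI length_Cons)
  then show "continuous_on V (partial_deriv i (pderivs is f))" by simp
qed

lemma C_r_on_has_derivative:
  fixes f :: "real^'n \<Rightarrow> real"
  assumes "C_r_on r V f" "open V" "y \<in> V" "r \<ge> 1"
  shows "(f has_derivative (\<lambda>h. grad f y \<bullet> h)) (at y)"
  using C_r_on_pderivs_has_derivative[OF assms(1-3), of "[]"] assms(4) by simp

lemma higher_dir_deriv_DERIV:
  fixes f :: "real^'n \<Rightarrow> real"
  assumes fC: "C_r_on r V f" and V: "open V" and m: "m < r" and p: "z + t *\<^sub>R v \<in> V"
  shows "((\<lambda>t. higher_dir_deriv m f v (z + t *\<^sub>R v)) has_real_derivative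
           higher_dir_deriv (Suc m) f v (z + t *\<^sub>R v)) (at t)"
proof -
  let ?p = "z + t *\<^sub>R v"
  have line: "((\<lambda>s::real. z + s *\<^sub>R v) has_derivative (\<lambda>s. s *\<^sub>R v)) (at t)"
    by (auto intro!: derivative_eq_intros)
  have term_deriv: "((\<lambda>t. pderivs is f (z + t *\<^sub>R v)) has_real_derivative
                       grad (pderivs is f) ?p \<bullet> v) (at t)"
    if "length is = m" for "is" :: "'n list"
  proof -
    have "((\<lambda>t. pderivs is f (z + t *\<^sub>R v)) has_derivative
            (\<lambda>s. grad (pderivs is f) ?p \<bullet> (s *\<^sub>R v))) (at t)"
      using has_derivative_compose[OF line C_r_on_pderivs_has_derivative[OF fC V p]] that m
      by simp
    moreover have "(\<lambda>s. grad (pderivs is f) ?p \<bullet> (s *\<^sub>R v)) = (*) (grad (pderivs is f) ?p \<bullet> v)"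
      by (rule ext) (simp add: mult.commute)
    ultimately show ?thesis by (simp add: has_field_derivative_def)
  qed
  have "((\<lambda>t. higher_dir_deriv m f v (z + t *\<^sub>R v)) has_real_derivative
        (\<Sum>is\<in>{is. length is = m}. (grad (pderivs is f) ?p \<bullet> v) * (\<Prod>k<m. v $ (is ! k)))) (at t)"
    unfolding higher_dir_deriv_def by (intro DERIV_sum DERIV_cmult_right term_deriv) simp
  moreover have "(\<Sum>is\<in>{is. length is = m}. (grad (pderivs is f) ?p \<bullet> v) * (\<Prod>k<m. v $ (is ! k)))
      = higher_dir_deriv (Suc m) f v ?p"
    unfolding higher_dir_deriv_Suc
    by (subst sum.swap) (simp add: inner_vec_def grad_def sum_distrib_left algebra_simps)
  ultimately show ?thesis by simp
qed

lemma taylor_lagrange_remainder: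
  fixes f :: "real^'n \<Rightarrow> real"
  assumes fC: "C_r_on r V f" and V: "open V" and r: "r \<ge> 1"
    and seg: "\<And>t. 0 \<le> t \<Longrightarrow> t \<le> 1 \<Longrightarrow> z + t *\<^sub>R v \<in> V"
  obtains t where "0 < t" "t < 1"
    "f (z + v) - taylor_poly r f z (z + v) =
       (higher_dir_deriv r f v (z + t *\<^sub>R v) - higher_dir_deriv r f v z) / fact r"
proof -
  let ?D = "\<lambda>m t. higher_dir_deriv m f v (z + t *\<^sub>R v)"
  have "\<exists>t. (if (1::real) < 0 then 1 < t \<and> t < 0 else 0 < t \<and> t < 1) \<and>
     ?D 0 1 = (\<Sum>m<r. ?D m 0 / fact m * (1 - 0) ^ m) + ?D r t / fact r * (1 - 0) ^ r"
  proof (rule Taylor[of r _ _ 0 1])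
    show "\<forall>m t. m < r \<and> 0 \<le> t \<and> t \<le> 1 \<longrightarrow> DERIV (?D m) t :> ?D (Suc m) t"
      using higher_dir_deriv_DERIV[OF fC V] seg by blast
  qed (use r in auto)
  then obtain t where t: "0 < t" "t < 1"
    and eq: "f (z + v) = (\<Sum>m<r. higher_dir_deriv m f v z / fact m) + ?D r t / fact r"
    by auto
  have "taylor_poly r f z (z + v) =
      (\<Sum>m<r. higher_dir_deriv m f v z / fact m) + higher_dir_deriv r f v z / fact r"
    unfolding taylor_poly_eq_higher_dir_deriv by (simp add: lessThan_Suc_atMost[symmetric])
  with t eq show ?thesis by (intro that) (simp_all add: diff_divide_distrib)
qed

lemma higher_dir_deriv_diff_bound:
  "\<bar>higher_dir_deriv m g v a - higher_dir_deriv m g v b\<bar>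
     \<le> (\<Sum>is\<in>{is. length is = m}. \<bar>pderivs is g a - pderivs is g b\<bar>) * norm v ^ m"
proof -
  have prod_bound: "\<bar>\<Prod>k<m. v $ (is ! k)\<bar> \<le> norm v ^ m" for "is"
  proof -
    have "\<bar>\<Prod>k<m. v $ (is ! k)\<bar> = (\<Prod>k<m. \<bar>v $ (is ! k)\<bar>)" by (simp add: abs_prod)
    also have "\<dots> \<le> (\<Prod>k<m. norm v)" by (intro prod_mono) (simp add: component_le_norm_cart)
    finally show ?thesis by simp
  qed
  have "\<bar>higher_dir_deriv m g v a - higher_dir_deriv m g v b\<bar>
      = \<bar>\<Sum>is\<in>{is. length is = m}. (pderivs is g a - pderivs is g b) * (\<Prod>k<m. v $ (is ! k))\<bar>"
    unfolding higher_dir_deriv_def by (simp add: sum_subtractf[symmetric] algebra_simps)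
  also have "\<dots> \<le> (\<Sum>is\<in>{is. length is = m}. \<bar>pderivs is g a - pderivs is g b\<bar> * norm v ^ m)"
    by (rule order_trans[OF sum_abs sum_mono]) (simp add: abs_mult mult_left_mono prod_bound)
  finally show ?thesis by (simp add: sum_distrib_right)
qed

lemma top_pderivs_uniformly_close:
  fixes f :: "real^'n \<Rightarrow> real"
  assumes fC: "C_r_on r V f" and K: "compact K" "K \<subseteq> V" and e: "e > 0"
  obtains d where "d > 0"
    "\<And>u z. u \<in> K \<Longrightarrow> z \<in> K \<Longrightarrow> dist u z < d \<Longrightarrow>
       (\<Sum>is\<in>{is :: 'n list. length is = r}. \<bar>pderivs is f u - pderivs is f z\<bar>) < e"
proof -
  define M where "M = (\<lambda>p. \<Sum>is\<in>{is :: 'n list. length is = r}. \<bar>pderivs is f (fst p) - pderivs is f (snd p)\<bar>)"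
  have "continuous_on K (pderivs is f)" if "length is = r" for "is" :: "'n list"
    using fC that K(2) unfolding C_r_on_def by (metis continuous_on_subset order_refl)
  then have "continuous_on (K \<times> K) M"
    unfolding M_def by (intro continuous_intros; rule continuous_on_compose2; force intro: continuous_intros)
  then have "uniformly_continuous_on (K \<times> K) M"
    by (rule compact_uniformly_continuous) (simp add: K(1) compact_Times)
  then obtain d where d: "d > 0"
    "\<And>p p'. p \<in> K \<times> K \<Longrightarrow> p' \<in> K \<times> K \<Longrightarrow> dist p' p < d \<Longrightarrow> dist (M p') (M p) < e"
    using e unfolding uniformly_continuous_on_def by metis
  show ?thesis
  proof (rule that[OF d(1)])
    fix u z assume "u \<in> K" "z \<in> K" "dist u z < d"
    then have "dist (M (u, z)) (M (z, z)) < e" using d(2)[of "(z, z)" "(u, z)"] by (simp add: dist_Pair_Pair)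
    moreover have "M (z, z) = 0" by (simp add: M_def)
    ultimately show "(\<Sum>is\<in>{is. length is = r}. \<bar>pderivs is f u - pderivs is f z\<bar>) < e"
      by (simp add: M_def dist_real_def)
  qed
qed

lemma taylor_remainder_uniform:
  fixes f :: "real^'n \<Rightarrow> real"
  assumes fC: "C_r_on r V f" and V: "open V" "xb \<in> V" and r: "r \<ge> 1" and eps: "\<epsilon> > 0"
  obtains s where "s > 0" "ball xb s \<subseteq> V"
    "\<And>x z. x \<in> ball xb s \<Longrightarrow> z \<in> ball xb s \<Longrightarrow> \<bar>f x - taylor_poly r f z x\<bar> \<le> \<epsilon> * dist x z ^ r"
proof -
  obtain s0 where s0: "s0 > 0" "cball xb s0 \<subseteq> V" using V open_contains_cball by blast
  have "\<epsilon> * fact r > 0" using eps by simp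
  then obtain d where d: "d > 0" "\<And>u z. u \<in> cball xb s0 \<Longrightarrow> z \<in> cball xb s0 \<Longrightarrow> dist u z < d \<Longrightarrow>
       (\<Sum>is\<in>{is. length is = r}. \<bar>pderivs is f u - pderivs is f z\<bar>) < \<epsilon> * fact r"
    using top_pderivs_uniformly_close[OF fC compact_cball s0(2)] by blast
  define s where "s = min s0 (d / 2)"
  have s_sub: "ball xb s \<subseteq> cball xb s0" by (auto simp: s_def)
  show ?thesis
  proof
    show "s > 0" using s0 d by (simp add: s_def)
    show "ball xb s \<subseteq> V" using s_sub s0 by blast
    fix x z assume x: "x \<in> ball xb s" and z: "z \<in> ball xb s"
    define v where "v = x - z"
    have seg: "z + t *\<^sub>R v \<in> ball xb s" if "0 \<le> t" "t \<le> 1" for t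
    proof -
      have "z + t *\<^sub>R v = (1 - t) *\<^sub>R z + t *\<^sub>R x" by (simp add: v_def algebra_simps)
      then show ?thesis using convexD_alt[OF convex_ball z x that] by simp
    qed
    then have "z + t *\<^sub>R v \<in> V" if "0 \<le> t" "t \<le> 1" for t
      using that s_sub s0(2) by blast
    then obtain t where t: "0 < t" "t < 1" and eq:
        "f (z + v) - taylor_poly r f z (z + v) =
           (higher_dir_deriv r f v (z + t *\<^sub>R v) - higher_dir_deriv r f v z) / fact r"
      using taylor_lagrange_remainder[OF fC V(1) r] by blast
    have "norm v \<le> dist x xb + dist z xb"
      using dist_triangle[of x z xb] by (simp add: v_def dist_norm norm_minus_commute)
    then have "norm v < d" using x z by (simp add: s_def dist_commute)
    moreover have "dist (z + t *\<^sub>R v) z \<le> norm v"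
      using t mult_right_mono[of t 1 "norm v"] by (simp add: dist_norm)
    ultimately have "dist (z + t *\<^sub>R v) z < d" by linarith
    moreover have "z + t *\<^sub>R v \<in> cball xb s0" "z \<in> cball xb s0"
      using seg[of t] t z s_sub by auto
    ultimately have close: "(\<Sum>is\<in>{is. length is = r}.
        \<bar>pderivs is f (z + t *\<^sub>R v) - pderivs is f z\<bar>) \<le> \<epsilon> * fact r"
      using d(2) by (simp add: less_imp_le)
    have "\<bar>f x - taylor_poly r f z x\<bar>
        = \<bar>higher_dir_deriv r f v (z + t *\<^sub>R v) - higher_dir_deriv r f v z\<bar> / fact r"
      using eq by (simp add: v_def)
    also have "\<dots> \<le> (\<Sum>is\<in>{is. length is = r}.
        \<bar>pderivs is f (z + t *\<^sub>R v) - pderivs is f z\<bar>) * norm v ^ r / fact r"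
      using higher_dir_deriv_diff_bound by (intro divide_right_mono) simp_all
    also have "\<dots> \<le> \<epsilon> * fact r * norm v ^ r / fact r"
      using close by (intro divide_right_mono mult_right_mono) simp_all
    also have "\<dots> = \<epsilon> * dist x z ^ r" by (simp add: v_def dist_norm)
    finally show "\<bar>f x - taylor_poly r f z x\<bar> \<le> \<epsilon> * dist x z ^ r" .
  qed
qed

lemma taylor_poly_local_min_imp_grad_zero:
  fixes f :: "real^'n \<Rightarrow> real"
  assumes fC: "C_r_on r V f" and V: "open V" "xb \<in> V" and r: "r \<ge> 1"
    and min: "local_min_at (taylor_poly r f xb) xb"
  shows "grad f xb = 0"
proof -
  let ?P = "taylor_poly r f xb"
  obtain e where e: "e > 0" "\<And>y. y \<in> ball xb e \<Longrightarrow> ?P xb \<le> ?P y"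
    using min unfolding local_min_at_def by blast
  have "norm (grad f xb) \<le> 0 + \<epsilon>" if eps: "\<epsilon> > 0" for \<epsilon>
  proof -
    obtain s where s: "s > 0" "\<And>x. x \<in> ball xb s \<Longrightarrow> \<bar>f x - ?P x\<bar> \<le> \<epsilon> * dist x xb ^ r"
      using taylor_remainder_uniform[OF fC V r eps] by (metis centre_in_ball)
    define e' where "e' = min (min e s) 1"
    have "f xb + \<epsilon> * dist xb xb \<le> f u + \<epsilon> * dist u xb" if u: "u \<in> ball xb e'" for u
    proof -
      have "dist u xb ^ r \<le> dist u xb"
        using power_decreasing[of 1 r "dist u xb"] r u by (simp add: e'_def dist_commute)
      then have "\<epsilon> * dist u xb ^ r \<le> \<epsilon> * dist u xb" using eps by simp
      moreover have "\<bar>f u - ?P u\<bar> \<le> \<epsilon> * dist u xb ^ r" "?P xb \<le> ?P u"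
        using s(2) e(2) u by (auto simp: e'_def)
      ultimately show ?thesis by (simp add: taylor_poly_at_center)
    qed
    moreover have "e' > 0" using e s by (simp add: e'_def)
    ultimately show ?thesis
      using penalized_local_min_grad_bound[OF C_r_on_has_derivative[OF fC V r], of e' \<epsilon> xb] eps
      by simp
  qed
  then show ?thesis using field_le_epsilon[of "norm (grad f xb)" 0] by simp
qed

lemma le_mult_infdist_power:
  fixes x :: "'a::metric_space"
  assumes A: "A \<noteq> {}" and \<eta>0: "\<eta>0 > 0" and e: "e \<ge> 0"
    and le: "\<And>z. z \<in> A \<Longrightarrow> dist x z < infdist x A + \<eta>0 \<Longrightarrow> b \<le> e * dist x z ^ r"
  shows "b \<le> e * infdist x A ^ r"
proof -
  have "eventually (\<lambda>\<eta>. b \<le> e * (infdist x A + \<eta>) ^ r) (at_right 0)"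
    unfolding eventually_at_right_field
  proof (intro exI[of _ \<eta>0] conjI allI impI)
    fix \<eta> :: real assume \<eta>: "0 < \<eta>" "\<eta> < \<eta>0"
    have "(INF a\<in>A. dist x a) < infdist x A + \<eta>" using \<eta> infdist_notempty[OF A] by simp
    then obtain z where z: "z \<in> A" "dist x z < infdist x A + \<eta>"
      using cINF_less_iff[OF A, of "dist x"] by (auto intro: bdd_belowI[of _ 0])
    then have "b \<le> e * dist x z ^ r" using le \<eta> by simp
    also have "\<dots> \<le> e * (infdist x A + \<eta>) ^ r"
      using z(2) e by (intro mult_left_mono power_mono) simp_all
    finally show "b \<le> e * (infdist x A + \<eta>) ^ r" .
  qed (use \<eta>0 in simp)
  moreover have "((\<lambda>\<eta>. e * (infdist x A + \<eta>) ^ r) \<longlongrightarrow> e * (infdist x A + 0) ^ r) (at_right 0)"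
    by (intro tendsto_intros)
  ultimately show ?thesis
    using tendsto_lowerbound[of "\<lambda>\<eta>. e * (infdist x A + \<eta>) ^ r"] by simp
qed

text \<open>Near a point of \<open>\<Sigma>\<close>, the Taylor polynomial at \<open>xb\<close> is the one at a nearly
  closest point of \<open>\<Sigma>\<close>, so the uniform remainder estimate is in terms of \<open>infdist x \<Sigma>\<close>.\<close>
lemma taylor_poly_approx_infdist:
  fixes f :: "real^'n \<Rightarrow> real"
  assumes fC: "C_r_on r V f" and V: "open V" "xb \<in> V" and r: "r \<ge> 1"
    and xb: "xb \<in> \<Sigma>" and \<delta>: "\<delta> > 0"
    and tay: "\<forall>z1 \<in> \<Sigma> \<inter> cball xb \<delta>. \<forall>z2 \<in> \<Sigma> \<inter> cball xb \<delta>.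
                 taylor_poly r f z1 = taylor_poly r f z2"
    and eps: "\<epsilon> > 0"
  shows "\<exists>s>0. \<forall>x\<in>ball xb s. \<bar>f x - taylor_poly r f xb x\<bar> \<le> \<epsilon> * infdist x \<Sigma> ^ r"
proof -
  obtain s1 where s1: "s1 > 0"
    "\<And>x z. x \<in> ball xb s1 \<Longrightarrow> z \<in> ball xb s1 \<Longrightarrow> \<bar>f x - taylor_poly r f z x\<bar> \<le> \<epsilon> * dist x z ^ r"
    using taylor_remainder_uniform[OF fC V r eps] by metis
  define s where "s = min s1 \<delta> / 2"
  have "\<bar>f x - taylor_poly r f xb x\<bar> \<le> \<epsilon> * infdist x \<Sigma> ^ r" if x: "x \<in> ball xb s" for x
  proof (rule le_mult_infdist_power)
    show "\<Sigma> \<noteq> {}" "s - dist x xb > 0" "\<epsilon> \<ge> 0" using xb x eps by (auto simp: dist_commute)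
    fix z assume z: "z \<in> \<Sigma>" "dist x z < infdist x \<Sigma> + (s - dist x xb)"
    have "infdist x \<Sigma> \<le> dist x xb" using infdist_le[OF xb] .
    then have "dist z xb < 2 * s"
      using z(2) x dist_triangle[of z xb x] by (simp add: dist_commute)
    then have "z \<in> ball xb s1" "z \<in> cball xb \<delta>" by (auto simp: s_def dist_commute)
    moreover have "x \<in> ball xb s1"
      using x by (simp add: s_def) (use zero_le_dist[of xb x] in linarith)
    moreover have "taylor_poly r f z = taylor_poly r f xb"
      by (rule tay[rule_format]) (use z(1) \<open>z \<in> cball xb \<delta>\<close> xb \<delta> in auto)
    ultimately show "\<bar>f x - taylor_poly r f xb x\<bar> \<le> \<epsilon> * dist x z ^ r"
      using s1(2) by metis
  qed
  moreover have "s > 0" using s1 \<delta> by (simp add: s_def)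
  ultimately show ?thesis by blast
qed

section \<open>Growth of \<open>f\<close> near \<open>\<Sigma>\<close>\<close>

lemma local_min_add_dominated:
  fixes f h \<phi> :: "'a::metric_space \<Rightarrow> real"
  assumes "\<eta> > 0" "\<And>x. x \<in> ball a \<eta> \<Longrightarrow> \<phi> x \<le> f x - f a"
    and "\<rho> > 0" "\<And>x. x \<in> ball a \<rho> \<Longrightarrow> \<bar>h x - h a\<bar> \<le> \<phi> x"
  shows "local_min_at (\<lambda>x. f x + h x) a"
  unfolding local_min_at_def
proof (intro exI[of _ "min \<eta> \<rho>"] conjI ballI)
  fix x assume "x \<in> ball a (min \<eta> \<rho>)"
  then have "\<phi> x \<le> f x - f a" "\<bar>h x - h a\<bar> \<le> \<phi> x" using assms by auto
  then show "f a + h a \<le> f x + h x" by linarith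
qed (use assms in simp)

lemma DERIV_real_root_abs:
  assumes "0 < n" "t \<noteq> 0"
  obtains D where "DERIV (root n) t :> D" "\<bar>D\<bar> = inverse (real n * \<bar>root n t\<bar> ^ (n - 1))"
proof
  show "DERIV (root n) t :> (if even n \<and> t < 0 then - 1 else 1) * inverse (real n * root n t ^ (n - 1))"
    by (rule DERIV_real_root_generic) (use assms in auto)
qed (simp add: abs_mult power_abs)

lemma real_root_less_imp_less_power: "0 < n \<Longrightarrow> 0 \<le> a \<Longrightarrow> root n t < a \<Longrightarrow> t < a ^ n"
  by (metis real_root_less_iff real_root_power_cancel)

lemma real_root_le_neg_imp_le_power: "0 < n \<Longrightarrow> 0 \<le> a \<Longrightarrow> root n t \<le> - a \<Longrightarrow> t \<le> - (a ^ n)"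
  by (metis real_root_le_iff real_root_minus real_root_power_cancel)

lemma cball_half_infdist_subset:
  assumes "infdist a A = 0" "x \<in> ball a (R / 2)"
  shows "cball x (infdist x A / 2) \<subseteq> ball a R"
proof
  fix u assume "u \<in> cball x (infdist x A / 2)"
  moreover have "infdist x A \<le> dist x a"
    using infdist_triangle[of x A a] assms(1) by simp
  ultimately show "u \<in> ball a R"
    using assms(2) dist_triangle[of a u x] by (simp add: dist_commute) (use zero_le_dist[of a x] in linarith)
qed

locale horn_gradient_bound =
  fixes f :: "'a::euclidean_space \<Rightarrow> real" and Df :: "'a \<Rightarrow> 'a"
    and xb :: 'a and \<Sigma> :: "'a set" and r :: nat and c w R :: real
  assumes r_ge_1: "r \<ge> 1" and c_pos: "c > 0" and w_pos: "w > 0" and R_pos: "R > 0"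
    and xb_infdist: "infdist xb \<Sigma> = 0"
    and has_grad: "\<And>y. y \<in> ball xb R \<Longrightarrow> (f has_derivative (\<lambda>h. Df y \<bullet> h)) (at y)"
    and grad_lower: "\<And>y. y \<in> ball xb R \<Longrightarrow> \<bar>f y - f xb\<bar> \<le> w * infdist y \<Sigma> ^ r \<Longrightarrow>
                       c * infdist y \<Sigma> ^ (r - 1) \<le> norm (Df y)"
begin

lemma shrink_radius: "0 < R' \<Longrightarrow> R' \<le> R \<Longrightarrow> horn_gradient_bound f Df xb \<Sigma> r c w R'"
  by unfold_locales (use r_ge_1 c_pos w_pos xb_infdist has_grad grad_lower in auto)

text \<open>On the horn, \<open>\<bar>root r (f y - f xb)\<bar> \<le> root r w * infdist y \<Sigma>\<close>; with the chain rule and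
  \<open>grad_lower\<close> this bounds the gradient of \<open>root r (f - f xb)\<close> from below by \<open>slope\<close>.\<close>
definition slope :: real where
  "slope = c / (real r * root r w ^ (r - 1))"

lemma slope_pos: "slope > 0"
  using c_pos r_ge_1 w_pos by (simp add: slope_def)

lemma root_level_gradient_lower:
  assumes y: "y \<in> ball xb R" and d: "infdist y \<Sigma> > 0" and ne: "f y \<noteq> f xb"
    and horn: "\<bar>f y - f xb\<bar> \<le> w * infdist y \<Sigma> ^ r"
  obtains G where "((\<lambda>u. root r (f u - f xb)) has_derivative (\<lambda>h. G \<bullet> h)) (at y)"
    "slope \<le> norm G"
proof -
  define t where "t = f y - f xb"
  define d where "d = infdist y \<Sigma>"
  have r0: "0 < r" and t0: "t \<noteq> 0" using r_ge_1 ne by (simp_all add: t_def)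
  obtain D where D: "DERIV (root r) t :> D" and D_abs: "\<bar>D\<bar> = inverse (real r * \<bar>root r t\<bar> ^ (r - 1))"
    using DERIV_real_root_abs[OF r0 t0] by blast
  have "((\<lambda>u. f u - f xb) has_derivative (\<lambda>h. Df y \<bullet> h)) (at y)"
    using has_derivative_diff[OF has_grad[OF y] has_derivative_const[of "f xb"]] by simp
  from has_derivative_compose[OF this D[unfolded has_field_derivative_def t_def]]
  have deriv: "((\<lambda>u. root r (f u - f xb)) has_derivative (\<lambda>h. (D *\<^sub>R Df y) \<bullet> h)) (at y)"
    by (simp add: inner_scaleR_left)
  have "\<bar>root r t\<bar> = root r \<bar>t\<bar>" using real_root_abs[OF r0] by simp
  also have "\<dots> \<le> root r (w * d ^ r)"
    using horn r0 by (simp add: t_def d_def)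
  also have "\<dots> = root r w * d"
    using d r0 by (simp add: d_def real_root_mult real_root_power_cancel)
  finally have "\<bar>root r t\<bar> ^ (r - 1) \<le> root r w ^ (r - 1) * d ^ (r - 1)"
    by (metis abs_ge_zero power_mono power_mult_distrib)
  moreover have "\<bar>root r t\<bar> > 0" using t0 r0 by simp
  moreover have "c * d ^ (r - 1) \<le> norm (Df y)"
    using grad_lower[OF y horn] by (simp add: d_def)
  ultimately have "c * d ^ (r - 1) / (real r * (root r w ^ (r - 1) * d ^ (r - 1)))
      \<le> norm (Df y) / (real r * \<bar>root r t\<bar> ^ (r - 1))"
    using r0 w_pos d c_pos by (intro frac_le mult_left_mono) (simp_all add: d_def)
  also have "\<dots> = norm (D *\<^sub>R Df y)"
    by (simp add: D_abs divide_inverse mult.commute)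
  finally have "slope \<le> norm (D *\<^sub>R Df y)"
    using d by (simp add: slope_def d_def)
  with deriv show ?thesis by (rule that)
qed

lemma continuous_on_ball: "continuous_on (ball xb R) f"
  using has_grad has_derivative_continuous by (blast intro: continuous_at_imp_continuous_on)

lemma min_strict_off_Sigma:
  assumes min: "\<And>u. u \<in> ball xb R \<Longrightarrow> f xb \<le> f u"
    and y: "y \<in> ball xb R" and d: "infdist y \<Sigma> > 0"
  shows "f xb < f y"
proof (rule ccontr)
  assume "\<not> f xb < f y"
  then have level: "f y = f xb" using min[OF y] by simp
  have "ball y (R - dist y xb) \<subseteq> ball xb R"
    by (simp add: ball_subset_ball_iff dist_commute)
  then have "local_min_at f y"
    unfolding local_min_at_def using y level min
    by (intro exI[of _ "R - dist y xb"]) (auto simp: dist_commute)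
  then have "Df y = 0" by (rule local_min_imp_grad_zero[OF has_grad[OF y]])
  moreover have "c * infdist y \<Sigma> ^ (r - 1) \<le> norm (Df y)"
    using grad_lower[OF y] level d w_pos by simp
  moreover have "c * infdist y \<Sigma> ^ (r - 1) > 0" using c_pos d by simp
  ultimately show False by simp
qed

text \<open>An Ekeland-type argument: minimise \<open>root r (f - f xb)\<close> plus the penalty
  \<open>slope / 2 * dist \<cdot> x\<close> over a small ball around \<open>x\<close>. At an interior minimiser the
  gradient of \<open>root r (f - f xb)\<close> has norm at most \<open>slope / 2\<close>, so the minimiser lies
  outside the horn, unless \<open>infdist y \<Sigma> = 0\<close> or \<open>f y = f xb\<close>.\<close>
lemma descent_point:
  assumes \<rho>: "\<rho> > 0" and sub: "cball x \<rho> \<subseteq> ball xb R"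
  obtains y where "y \<in> cball x \<rho>"
    "\<And>u. u \<in> cball x \<rho> \<Longrightarrow>
       root r (f y - f xb) + slope / 2 * dist y x \<le> root r (f u - f xb) + slope / 2 * dist u x"
    "dist y x < \<rho> \<Longrightarrow> infdist y \<Sigma> > 0 \<Longrightarrow> f y \<noteq> f xb \<Longrightarrow>
       w * infdist y \<Sigma> ^ r < \<bar>f y - f xb\<bar>"
proof -
  let ?\<psi> = "\<lambda>u. root r (f u - f xb) + slope / 2 * dist u x"
  have "continuous_on (cball x \<rho>) ?\<psi>"
    using continuous_on_subset[OF continuous_on_ball sub] by (intro continuous_intros)
  then obtain y where y: "y \<in> cball x \<rho>" and min: "\<And>u. u \<in> cball x \<rho> \<Longrightarrow> ?\<psi> y \<le> ?\<psi> u"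
    using continuous_attains_inf[OF compact_cball, of x \<rho> ?\<psi>] \<rho> by auto
  have "w * infdist y \<Sigma> ^ r < \<bar>f y - f xb\<bar>"
    if inner: "dist y x < \<rho>" and d: "infdist y \<Sigma> > 0" and ne: "f y \<noteq> f xb"
  proof (rule ccontr)
    assume "\<not> ?thesis"
    then have horn: "\<bar>f y - f xb\<bar> \<le> w * infdist y \<Sigma> ^ r" by simp
    have y_R: "y \<in> ball xb R" using y sub by blast
    obtain G where G: "((\<lambda>u. root r (f u - f xb)) has_derivative (\<lambda>h. G \<bullet> h)) (at y)"
      and slope_le: "slope \<le> norm G"
      using root_level_gradient_lower[OF y_R d ne horn] by blast
    have "ball y (\<rho> - dist y x) \<subseteq> cball x \<rho>"
      by (simp add: ball_subset_cball_iff dist_commute)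
    then have "norm G \<le> slope / 2"
      using penalized_local_min_grad_bound[OF G, of "\<rho> - dist y x" "slope / 2" x] min inner slope_pos
      by (meson diff_gt_0_iff_gt half_gt_zero less_imp_le subsetD)
    then show False using slope_le slope_pos by simp
  qed
  with y min show ?thesis by (rule that)
qed

lemma descent_point_half_infdist:
  assumes x: "x \<in> ball xb (R / 2)" and d: "infdist x \<Sigma> > 0"
  obtains y where "y \<in> ball xb R" "dist y x \<le> infdist x \<Sigma> / 2"
    "infdist x \<Sigma> / 2 \<le> infdist y \<Sigma>" "infdist y \<Sigma> \<le> 3 / 2 * infdist x \<Sigma>"
    "root r (f y - f xb) + slope / 2 * dist y x \<le> root r (f x - f xb)"
    "dist y x < infdist x \<Sigma> / 2 \<Longrightarrow> f y \<noteq> f xb \<Longrightarrow> w * infdist y \<Sigma> ^ r < \<bar>f y - f xb\<bar>"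
proof -
  have sub: "cball x (infdist x \<Sigma> / 2) \<subseteq> ball xb R"
    by (rule cball_half_infdist_subset[OF xb_infdist x])
  obtain y where y: "y \<in> cball x (infdist x \<Sigma> / 2)"
    and y_min: "\<And>u. u \<in> cball x (infdist x \<Sigma> / 2) \<Longrightarrow>
       root r (f y - f xb) + slope / 2 * dist y x \<le> root r (f u - f xb) + slope / 2 * dist u x"
    and y_out: "dist y x < infdist x \<Sigma> / 2 \<Longrightarrow> infdist y \<Sigma> > 0 \<Longrightarrow> f y \<noteq> f xb \<Longrightarrow>
       w * infdist y \<Sigma> ^ r < \<bar>f y - f xb\<bar>"
    using descent_point[OF _ sub] d by (metis half_gt_zero)
  have yx: "dist y x \<le> infdist x \<Sigma> / 2" using y by (simp add: dist_commute)
  have dy: "infdist x \<Sigma> / 2 \<le> infdist y \<Sigma>" "infdist y \<Sigma> \<le> 3 / 2 * infdist x \<Sigma>"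
    using infdist_triangle[of x \<Sigma> y] infdist_triangle[of y \<Sigma> x] yx
    by (simp_all add: dist_commute)
  show ?thesis
  proof (rule that[OF _ yx dy])
    show "y \<in> ball xb R" using y sub by blast
    show "root r (f y - f xb) + slope / 2 * dist y x \<le> root r (f x - f xb)"
      using y_min[of x] d by simp
    show "w * infdist y \<Sigma> ^ r < \<bar>f y - f xb\<bar>"
      if "dist y x < infdist x \<Sigma> / 2" "f y \<noteq> f xb"
      using y_out that dy(1) d by simp
  qed
qed

lemma horn_growth_of_min:
  assumes min: "\<And>u. u \<in> ball xb R \<Longrightarrow> f xb \<le> f u" and x: "x \<in> ball xb (R / 2)"
  shows "(min (slope / 4) (root r w / 2) * infdist x \<Sigma>) ^ r \<le> f x - f xb"
proof (rule ccontr)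
  define k where "k = min (slope / 4) (root r w / 2)"
  define d where "d = infdist x \<Sigma>"
  have r0: "0 < r" using r_ge_1 by simp
  have k: "k > 0" using slope_pos w_pos r0 by (simp add: k_def)
  have x_R: "x \<in> ball xb R" using x R_pos by simp
  assume "\<not> (min (slope / 4) (root r w / 2) * infdist x \<Sigma>) ^ r \<le> f x - f xb"
  then have below: "f x - f xb < (k * d) ^ r" by (simp add: k_def d_def)
  have d: "d > 0"
    using below min[OF x_R] r0 infdist_nonneg[of x \<Sigma>] by (cases "d = 0") (simp_all add: d_def power_0_left)
  have "root r (f x - f xb) < root r ((k * d) ^ r)"
    using below r0 by simp
  then have root_x: "root r (f x - f xb) < k * d"
    using k d r0 by (simp add: real_root_power_cancel)
  obtain y where y_R: "y \<in> ball xb R" and dy: "d / 2 \<le> infdist y \<Sigma>"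
    and descent: "root r (f y - f xb) + slope / 2 * dist y x \<le> root r (f x - f xb)"
    and y_out: "dist y x < d / 2 \<Longrightarrow> f y \<noteq> f xb \<Longrightarrow> w * infdist y \<Sigma> ^ r < \<bar>f y - f xb\<bar>"
    using descent_point_half_infdist[OF x d[unfolded d_def]] unfolding d_def by blast
  have above: "f xb < f y" using min_strict_off_Sigma[OF min y_R] dy d by simp
  then have root_y: "root r (f y - f xb) \<ge> 0" by (simp add: real_root_ge_zero)
  have "k * d \<le> slope / 2 * (d / 2)" using d by (simp add: k_def)
  then have "slope / 2 * dist y x < slope / 2 * (d / 2)"
    using descent root_x root_y by linarith
  then have "w * infdist y \<Sigma> ^ r < f y - f xb"
    using y_out above slope_pos by simp
  moreover have "root r (f y - f xb) < 2 * k * infdist y \<Sigma>"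
  proof -
    have "k * d \<le> 2 * k * infdist y \<Sigma>" using dy k by simp
    moreover have "slope / 2 * dist y x \<ge> 0" using slope_pos by simp
    ultimately show ?thesis using descent root_x by linarith
  qed
  then have "f y - f xb < (2 * k * infdist y \<Sigma>) ^ r"
    by (rule real_root_less_imp_less_power[OF r0, rotated]) (use k infdist_nonneg[of y \<Sigma>] in simp)
  moreover have "(2 * k) ^ r \<le> root r w ^ r"
    using k by (intro power_mono) (simp_all add: k_def)
  then have "(2 * k) ^ r * infdist y \<Sigma> ^ r \<le> w * infdist y \<Sigma> ^ r"
    using w_pos r0 by (intro mult_right_mono) (simp_all add: infdist_nonneg)
  then have "(2 * k * infdist y \<Sigma>) ^ r \<le> w * infdist y \<Sigma> ^ r"
    by (simp add: power_mult_distrib)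
  ultimately show False by simp
qed

lemma descent_below_level:
  assumes x: "x \<in> ball xb (R / 2)" and below: "f x < f xb"
  obtains y where "dist y x \<le> infdist x \<Sigma> / 2" "f y < f xb"
    "f y - f xb \<le> - (min w ((slope / 6) ^ r) * infdist y \<Sigma> ^ r)"
proof (cases "infdist x \<Sigma> = 0")
  case True
  then show ?thesis using below r_ge_1 by (intro that[of x]) (simp_all add: power_0_left)
next
  case False
  define d where "d = infdist x \<Sigma>"
  have r0: "0 < r" using r_ge_1 by simp
  have d: "d > 0" using False infdist_nonneg[of x \<Sigma>] by (simp add: d_def)
  obtain y where yx: "dist y x \<le> d / 2" and dy: "infdist y \<Sigma> \<le> 3 / 2 * d"
    and descent: "root r (f y - f xb) + slope / 2 * dist y x \<le> root r (f x - f xb)"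
    and y_out: "dist y x < d / 2 \<Longrightarrow> f y \<noteq> f xb \<Longrightarrow> w * infdist y \<Sigma> ^ r < \<bar>f y - f xb\<bar>"
    using descent_point_half_infdist[OF x d[unfolded d_def]] unfolding d_def by blast
  have root_x: "root r (f x - f xb) < 0" using below r0 by simp
  moreover have "slope / 2 * dist y x \<ge> 0" using slope_pos by simp
  ultimately have "root r (f y - f xb) < 0" using descent by linarith
  then have fy: "f y < f xb" using r0 by simp
  have "f y - f xb \<le> - (min w ((slope / 6) ^ r) * infdist y \<Sigma> ^ r)"
  proof (cases "\<bar>f y - f xb\<bar> \<le> w * infdist y \<Sigma> ^ r")
    case False
    then have "f y - f xb \<le> - (w * infdist y \<Sigma> ^ r)" using fy by simp
    moreover have "min w ((slope / 6) ^ r) * infdist y \<Sigma> ^ r \<le> w * infdist y \<Sigma> ^ r"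
      by (intro mult_right_mono) (simp_all add: infdist_nonneg)
    ultimately show ?thesis by simp
  next
    case True
    then have "dist y x = d / 2" using y_out yx fy by force
    then have "slope / 2 * dist y x = slope / 4 * d" by simp
    moreover have "slope / 6 * infdist y \<Sigma> \<le> slope / 4 * d"
    proof -
      have "slope / 6 * infdist y \<Sigma> \<le> slope / 6 * (3 / 2 * d)"
        using dy slope_pos by (intro mult_left_mono) simp_all
      also have "\<dots> = slope / 4 * d" by simp
      finally show ?thesis .
    qed
    ultimately have "root r (f y - f xb) \<le> - (slope / 6 * infdist y \<Sigma>)"
      using descent root_x by linarith
    then have "f y - f xb \<le> - ((slope / 6 * infdist y \<Sigma>) ^ r)"
      by (rule real_root_le_neg_imp_le_power[OF r0, rotated]) (use slope_pos infdist_nonneg[of y \<Sigma>] in simp)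
    then have "f y - f xb \<le> - ((slope / 6) ^ r * infdist y \<Sigma> ^ r)"
      by (simp only: power_mult_distrib)
    moreover have "min w ((slope / 6) ^ r) * infdist y \<Sigma> ^ r \<le> (slope / 6) ^ r * infdist y \<Sigma> ^ r"
      by (intro mult_right_mono) (simp_all add: infdist_nonneg)
    ultimately show ?thesis by simp
  qed
  with yx fy show ?thesis by (intro that) (simp_all add: d_def)
qed

lemma local_min_imp_horn_growth:
  assumes "local_min_at f xb"
  obtains \<kappa> \<eta> where "\<kappa> > 0" "\<eta> > 0" "\<And>x. x \<in> ball xb \<eta> \<Longrightarrow> \<kappa> * infdist x \<Sigma> ^ r \<le> f x - f xb"
proof -
  obtain e where e: "e > 0" "\<And>u. u \<in> ball xb e \<Longrightarrow> f xb \<le> f u"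
    using assms unfolding local_min_at_def by blast
  interpret small: horn_gradient_bound f Df xb \<Sigma> r c w "min R e"
    using shrink_radius e R_pos by simp
  define k where "k = min (slope / 4) (root r w / 2)"
  have k: "k > 0" using slope_pos w_pos r_ge_1 by (simp add: k_def)
  show ?thesis
  proof (rule that[of "k ^ r" "min R e / 2"])
    fix x assume "x \<in> ball xb (min R e / 2)"
    then have "(k * infdist x \<Sigma>) ^ r \<le> f x - f xb"
      using small.horn_growth_of_min e(2) unfolding k_def by simp
    then show "k ^ r * infdist x \<Sigma> ^ r \<le> f x - f xb" by (simp add: power_mult_distrib)
  qed (use k e R_pos in simp_all)
qed

lemma local_min_stable_under_horn_perturbation:
  assumes "local_min_at f xb"
  shows "\<exists>\<epsilon>>0. \<forall>h. (\<exists>\<rho>>0. \<forall>x \<in> cball xb \<rho>. \<bar>h x - h xb\<bar> \<le> \<epsilon> * infdist x \<Sigma> ^ r)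
                  \<longrightarrow> local_min_at (\<lambda>x. f x + h x) xb"
proof -
  obtain \<kappa> \<eta> where \<kappa>: "\<kappa> > 0" "\<eta> > 0"
    "\<And>x. x \<in> ball xb \<eta> \<Longrightarrow> \<kappa> * infdist x \<Sigma> ^ r \<le> f x - f xb"
    using local_min_imp_horn_growth[OF assms] by blast
  show ?thesis
  proof (intro exI[of _ \<kappa>] conjI allI impI)
    fix h :: "'a \<Rightarrow> real"
    assume "\<exists>\<rho>>0. \<forall>x \<in> cball xb \<rho>. \<bar>h x - h xb\<bar> \<le> \<kappa> * infdist x \<Sigma> ^ r"
    then obtain \<rho> where "\<rho> > 0" "\<forall>x \<in> cball xb \<rho>. \<bar>h x - h xb\<bar> \<le> \<kappa> * infdist x \<Sigma> ^ r"
      by blast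
    then show "local_min_at (\<lambda>x. f x + h x) xb"
      by (intro local_min_add_dominated[where \<phi> = "\<lambda>x. \<kappa> * infdist x \<Sigma> ^ r", OF \<kappa>(2,3)]) auto
  qed (rule \<kappa>(1))
qed

lemma local_min_of_horn_approx:
  assumes approx: "\<And>\<epsilon>. \<epsilon> > 0 \<Longrightarrow> \<exists>s>0. \<forall>x\<in>ball xb s. \<bar>f x - P x\<bar> \<le> \<epsilon> * infdist x \<Sigma> ^ r"
    and center: "P xb = f xb" and P_min: "local_min_at P xb"
  shows "local_min_at f xb"
proof -
  obtain e where e: "e > 0" "\<And>y. y \<in> ball xb e \<Longrightarrow> P xb \<le> P y"
    using P_min unfolding local_min_at_def by blast
  define \<kappa> where "\<kappa> = min w ((slope / 6) ^ r)"
  have \<kappa>: "\<kappa> > 0" using w_pos slope_pos by (simp add: \<kappa>_def)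
  have "\<kappa> / 2 > 0" using \<kappa> by simp
  then obtain s where s: "s > 0" "\<forall>x\<in>ball xb s. \<bar>f x - P x\<bar> \<le> \<kappa> / 2 * infdist x \<Sigma> ^ r"
    using approx by blast
  define e' where "e' = min (R / 2) (min e s) / 2"
  show ?thesis
    unfolding local_min_at_def
  proof (intro exI[of _ e'] conjI ballI)
    show "e' > 0" using R_pos e s by (simp add: e'_def)
    fix x assume x: "x \<in> ball xb e'"
    show "f xb \<le> f x"
    proof (rule ccontr)
      assume "\<not> f xb \<le> f x"
      moreover have "x \<in> ball xb (R / 2)"
        using x by (simp add: e'_def) (use zero_le_dist[of xb x] in linarith)
      ultimately obtain y where yx: "dist y x \<le> infdist x \<Sigma> / 2" and fy: "f y < f xb"
        and descent: "f y - f xb \<le> - (\<kappa> * infdist y \<Sigma> ^ r)"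
        unfolding \<kappa>_def by (metis not_le descent_below_level)
      have "infdist x \<Sigma> \<le> dist x xb"
        using infdist_triangle[of x \<Sigma> xb] xb_infdist by simp
      then have "dist y xb < 2 * e'"
        using x yx dist_triangle[of y xb x] by (simp add: dist_commute)
          (use zero_le_dist[of x xb] in linarith)
      then have "y \<in> ball xb e" "y \<in> ball xb s" by (auto simp: e'_def dist_commute)
      then have "P xb \<le> P y" "\<bar>f y - P y\<bar> \<le> \<kappa> / 2 * infdist y \<Sigma> ^ r"
        using e(2) s(2) by auto
      then show False using fy descent center by simp
    qed
  qed
qed

lemma local_min_iff_of_horn_approx:
  assumes approx: "\<And>\<epsilon>. \<epsilon> > 0 \<Longrightarrow> \<exists>s>0. \<forall>x\<in>ball xb s. \<bar>f x - P x\<bar> \<le> \<epsilon> * infdist x \<Sigma> ^ r"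
    and center: "P xb = f xb"
  shows "local_min_at f xb \<longleftrightarrow> local_min_at P xb"
proof
  assume "local_min_at f xb"
  then obtain \<epsilon> where "\<epsilon> > 0" and stable: "\<And>h. (\<exists>\<rho>>0. \<forall>x \<in> cball xb \<rho>. \<bar>h x - h xb\<bar> \<le> \<epsilon> * infdist x \<Sigma> ^ r)
      \<Longrightarrow> local_min_at (\<lambda>x. f x + h x) xb"
    using local_min_stable_under_horn_perturbation by blast
  then obtain s where s: "s > 0" "\<forall>x\<in>ball xb s. \<bar>f x - P x\<bar> \<le> \<epsilon> * infdist x \<Sigma> ^ r"
    using approx by blast
  have "\<bar>(P x - f x) - (P xb - f xb)\<bar> \<le> \<epsilon> * infdist x \<Sigma> ^ r" if "x \<in> cball xb (s / 2)" for x
  proof -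
    have "x \<in> ball xb s" using that s(1) by simp
    then show ?thesis using s(2) by (simp add: center abs_minus_commute[of "P x"])
  qed
  then have "local_min_at (\<lambda>x. f x + (P x - f x)) xb"
    using stable[of "\<lambda>x. P x - f x"] s(1) half_gt_zero by blast
  then show "local_min_at P xb" by simp
qed (rule local_min_of_horn_approx[OF approx center])

end

theorem corollary3p4:
  fixes f :: "real^'n \<Rightarrow> real" and xb :: "real^'n" and \<Sigma> :: "(real^'n) set"
    and V :: "(real^'n) set" and r :: nat and c \<delta> w :: real
  assumes r: "r \<ge> 1"
    and V: "open V" "xb \<in> V"
    and fC: "C_r_on r V f"
    and lc: "locally_closed_at \<Sigma> xb"
    and crit: "{x \<in> V. grad f x = 0} \<subseteq> \<Sigma>"
    and pos: "c > 0" "\<delta> > 0" "w > 0"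
    and grow: "\<forall>x \<in> horn_nbhd r \<Sigma> f xb w \<inter> cball xb \<delta>.
                 norm (grad f x) \<ge> c * infdist x \<Sigma> ^ (r - 1)"
    and tay: "\<forall>z1 \<in> \<Sigma> \<inter> cball xb \<delta>. \<forall>z2 \<in> \<Sigma> \<inter> cball xb \<delta>.
                 taylor_poly r f z1 = taylor_poly r f z2"
  shows "(local_min_at f xb \<longleftrightarrow> local_min_at (taylor_poly r f xb) xb)
       \<and> (local_min_at f xb \<longrightarrow>
            (\<exists>\<epsilon>>0. \<forall>h :: real^'n \<Rightarrow> real.
               (\<exists>\<rho>>0. \<forall>x \<in> cball xb \<rho>. \<bar>h x - h xb\<bar> \<le> \<epsilon> * infdist x \<Sigma> ^ r)
               \<longrightarrow> local_min_at (\<lambda>x. f x + h x) xb))"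
proof (cases "grad f xb = 0")
  case False
  then have "\<not> local_min_at f xb" "\<not> local_min_at (taylor_poly r f xb) xb"
    using local_min_imp_grad_zero[OF C_r_on_has_derivative[OF fC V r]]
      taylor_poly_local_min_imp_grad_zero[OF fC V r] by auto
  then show ?thesis by simp
next
  case True
  then have xb_\<Sigma>: "xb \<in> \<Sigma>" using crit V(2) by blast
  obtain R where R: "R > 0" "ball xb R \<subseteq> V \<inter> ball xb \<delta>"
    using open_contains_ball[of "V \<inter> ball xb \<delta>"] V pos(2) by (meson IntI centre_in_ball open_Int open_ball)
  interpret horn_gradient_bound f "grad f" xb \<Sigma> r c w R
  proof
    fix y assume y: "y \<in> ball xb R"
    then show "(f has_derivative (\<lambda>h. grad f y \<bullet> h)) (at y)"
      using C_r_on_has_derivative[OF fC V(1) _ r] R(2) by blast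
    assume "\<bar>f y - f xb\<bar> \<le> w * infdist y \<Sigma> ^ r"
    then show "c * infdist y \<Sigma> ^ (r - 1) \<le> norm (grad f y)"
      using grow y R(2) by (auto simp: horn_nbhd_def)
  qed (use r pos R xb_\<Sigma> in auto)
  have "taylor_poly r f xb xb = f xb" by (rule taylor_poly_at_center)
  then show ?thesis
    using local_min_iff_of_horn_approx[OF taylor_poly_approx_infdist[OF fC V r xb_\<Sigma> pos(2) tay]]
      local_min_stable_under_horn_perturbation by blast
qed

end
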